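(* Let $T$ be a tree with diametral path $D = v_0 v_1\cdots v_d$. If for some $i$ there is a vertex $u \notin D$ protruding from $v_i$ with $d(u,v_i) = \ell > 2$ (i.e. a limb of length $\ell>2$ protrudes from $v_i$), then $T$ is not diametrical.
   Context: Let $G=(V,E)$ be a finite connected graph with distance $d(u,v)$, eccentricity $e(v)=\max_w d(v,w)$ and diameter $\mathrm{diam}(G)=\max_v e(v)$. A broadcast is a function $f: V\to\{0,\dots,\mathrm{diam}(G)\}$ with $f(v)\le e(v)$; its cost is $\sum_v f(v)$; it is dominating if every $u$ has some $v$ with $f(v)\ge 1$ and $d(u,v)\le f(v)$; a dominating broadcast is minimal if decreasing $f(v)$ for any $v$ with $f(v)>0$ destroys domination. $\Gamma_b(G)$ is the maximum cost of a minimal dominating broadcast, and $G$ is called diametrical if $\Gamma_b(G)=\mathrm{diam}(G)$. For a tree with fixed diametral path $D$, a vertex $u\notin D$ protrudes from $v_i\in D$ if $v_i$ is the vertex of $D$ closest to $u$. *)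

theory Defs
  imports Main
begin

text \<open>Finite simple graphs: a finite vertex set V and a symmetric irreflexive
adjacency relation E (only edges between vertices of V matter).\<close>

definition graph :: "'a set \<Rightarrow> ('a \<Rightarrow> 'a \<Rightarrow> bool) \<Rightarrow> bool" where
  "graph V E \<longleftrightarrow> finite V \<and> V \<noteq> {} \<and> (\<forall>x y. E x y \<longrightarrow> E y x) \<and> (\<forall>x. \<not> E x x)"

definition walk :: "'a set \<Rightarrow> ('a \<Rightarrow> 'a \<Rightarrow> bool) \<Rightarrow> 'a list \<Rightarrow> bool" where
  "walk V E xs \<longleftrightarrow> xs \<noteq> [] \<and> set xs \<subseteq> V \<and> (\<forall>i. Suc i < length xs \<longrightarrow> E (xs ! i) (xs ! Suc i))"

definition connected_graph :: "'a set \<Rightarrow> ('a \<Rightarrow> 'a \<Rightarrow> bool) \<Rightarrow> bool" where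
  "connected_graph V E \<longleftrightarrow> graph V E \<and>
     (\<forall>u\<in>V. \<forall>v\<in>V. \<exists>xs. walk V E xs \<and> hd xs = u \<and> last xs = v)"

definition has_cycle :: "'a set \<Rightarrow> ('a \<Rightarrow> 'a \<Rightarrow> bool) \<Rightarrow> bool" where
  "has_cycle V E \<longleftrightarrow> (\<exists>xs. walk V E xs \<and> distinct xs \<and> length xs \<ge> 3 \<and> E (last xs) (hd xs))"

definition tree :: "'a set \<Rightarrow> ('a \<Rightarrow> 'a \<Rightarrow> bool) \<Rightarrow> bool" where
  "tree V E \<longleftrightarrow> connected_graph V E \<and> \<not> has_cycle V E"

definition gdist :: "'a set \<Rightarrow> ('a \<Rightarrow> 'a \<Rightarrow> bool) \<Rightarrow> 'a \<Rightarrow> 'a \<Rightarrow> nat" where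
  "gdist V E u v = (LEAST n. \<exists>xs. walk V E xs \<and> hd xs = u \<and> last xs = v \<and> length xs = Suc n)"

definition ecc :: "'a set \<Rightarrow> ('a \<Rightarrow> 'a \<Rightarrow> bool) \<Rightarrow> 'a \<Rightarrow> nat" where
  "ecc V E v = Max ((\<lambda>w. gdist V E v w) ` V)"

definition diam :: "'a set \<Rightarrow> ('a \<Rightarrow> 'a \<Rightarrow> bool) \<Rightarrow> nat" where
  "diam V E = Max ((\<lambda>v. ecc V E v) ` V)"

definition broadcast :: "'a set \<Rightarrow> ('a \<Rightarrow> 'a \<Rightarrow> bool) \<Rightarrow> ('a \<Rightarrow> nat) \<Rightarrow> bool" where
  "broadcast V E f \<longleftrightarrow> (\<forall>v\<in>V. f v \<le> ecc V E v) \<and> (\<forall>v. v \<notin> V \<longrightarrow> f v = 0)"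

definition bcost :: "'a set \<Rightarrow> ('a \<Rightarrow> nat) \<Rightarrow> nat" where
  "bcost V f = (\<Sum>v\<in>V. f v)"

definition dominating :: "'a set \<Rightarrow> ('a \<Rightarrow> 'a \<Rightarrow> bool) \<Rightarrow> ('a \<Rightarrow> nat) \<Rightarrow> bool" where
  "dominating V E f \<longleftrightarrow> broadcast V E f \<and>
     (\<forall>u\<in>V. \<exists>v\<in>V. f v \<ge> 1 \<and> gdist V E u v \<le> f v)"

definition minimal_dominating :: "'a set \<Rightarrow> ('a \<Rightarrow> 'a \<Rightarrow> bool) \<Rightarrow> ('a \<Rightarrow> nat) \<Rightarrow> bool" where
  "minimal_dominating V E f \<longleftrightarrow> dominating V E f \<and>
     (\<forall>v\<in>V. \<forall>k. k < f v \<longrightarrow> \<not> dominating V E (f(v := k)))"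

definition upper_broadcast_number :: "'a set \<Rightarrow> ('a \<Rightarrow> 'a \<Rightarrow> bool) \<Rightarrow> nat" where
  "upper_broadcast_number V E = Max {bcost V f | f. minimal_dominating V E f}"

definition diametrical :: "'a set \<Rightarrow> ('a \<Rightarrow> 'a \<Rightarrow> bool) \<Rightarrow> bool" where
  "diametrical V E \<longleftrightarrow> upper_broadcast_number V E = diam V E"

definition diametral_path :: "'a set \<Rightarrow> ('a \<Rightarrow> 'a \<Rightarrow> bool) \<Rightarrow> 'a list \<Rightarrow> bool" where
  "diametral_path V E ps \<longleftrightarrow> walk V E ps \<and> distinct ps \<and> length ps = Suc (diam V E)
     \<and> gdist V E (hd ps) (last ps) = diam V E"

definition protrudes :: "'a set \<Rightarrow> ('a \<Rightarrow> 'a \<Rightarrow> bool) \<Rightarrow> 'a list \<Rightarrow> 'a \<Rightarrow> nat \<Rightarrow> bool" where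
  "protrudes V E ps u i \<longleftrightarrow> u \<in> V \<and> u \<notin> set ps \<and> i < length ps \<and>
     (\<forall>j<length ps. j \<noteq> i \<longrightarrow> gdist V E u (ps ! i) < gdist V E u (ps ! j))"

end

theory Submission
  imports Defs
begin

text \<open>
  Write v 0, ..., v D for the diametral path and v i = y 0, y 1, ..., y \<ell> = u for the limb.
  If each of a few owners can reach its own target without reaching the target of another
  owner, a minimal dominating broadcast exists in which every owner pays at least the distance
  to its target.  Depending on which of v (i - 1), v i, v (i + 1) carry further branches, we
  choose owners among v 0, v D, y 3 and the branch vertices, and targets around v i, whose
  distances add up to D + 1, so the upper broadcast number exceeds the diameter.
\<close>

section \<open>Walks and distances\<close>

lemma walk_Cons_Cons: "walk V E (x # y # xs) \<longleftrightarrow> x \<in> V \<and> E x y \<and> walk V E (y # xs)"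
proof
  assume h: "walk V E (x # y # xs)"
  have "E ((y # xs) ! k) ((y # xs) ! Suc k)" if "Suc k < length (y # xs)" for k
    using h that unfolding walk_def by (metis Suc_less_eq length_Cons nth_Cons_Suc)
  with h show "x \<in> V \<and> E x y \<and> walk V E (y # xs)" unfolding walk_def by fastforce
next
  assume "x \<in> V \<and> E x y \<and> walk V E (y # xs)"
  then show "walk V E (x # y # xs)" unfolding walk_def
    by (auto simp: nth_Cons split: nat.split)
qed

lemma walk_subset: "walk V E xs \<Longrightarrow> set xs \<subseteq> V"
  by (simp add: walk_def)

lemma walk_not_Nil: "walk V E xs \<Longrightarrow> xs \<noteq> []"
  by (simp add: walk_def)

lemma walk_singleton [simp]: "walk V E [x] \<longleftrightarrow> x \<in> V"
  by (simp add: walk_def)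

lemma walk_append:
  "walk V E xs \<Longrightarrow> walk V E ys \<Longrightarrow> last xs = hd ys \<Longrightarrow> walk V E (xs @ tl ys)"
proof (induction xs rule: induct_list012)
  case 1
  then show ?case by (simp add: walk_def)
next
  case (2 x)
  then have "ys = x # tl ys" using walk_not_Nil[of V E ys] by (cases ys) auto
  with 2 show ?case by (metis append_Cons append_Nil)
next
  case (3 x y zs)
  then show ?case by (simp add: walk_Cons_Cons)
qed

lemma walk_rev: "graph V E \<Longrightarrow> walk V E xs \<Longrightarrow> walk V E (rev xs)"
proof (induction xs rule: induct_list012)
  case (3 x y zs)
  then have "walk V E (rev (y # zs))" "x \<in> V" "E y x"
    by (auto simp: walk_Cons_Cons graph_def)
  then have "walk V E (rev (y # zs) @ tl [y, x])"
    by (intro walk_append) (auto simp: walk_Cons_Cons dest: walk_subset)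
  then show ?case by simp
qed (simp_all add: walk_def)

lemma walk_take: "walk V E xs \<Longrightarrow> 0 < n \<Longrightarrow> walk V E (take n xs)"
  unfolding walk_def by (auto dest: in_set_takeD)

lemma walk_drop: "walk V E xs \<Longrightarrow> n < length xs \<Longrightarrow> walk V E (drop n xs)"
  unfolding walk_def by (auto dest: in_set_dropD simp: add.commute[of n])

lemma walk_segment:
  assumes "walk V E xs" "j \<le> k" "k < length xs"
  shows "walk V E (drop j (take (Suc k) xs))" "hd (drop j (take (Suc k) xs)) = xs ! j"
    "last (drop j (take (Suc k) xs)) = xs ! k" "length (drop j (take (Suc k) xs)) = Suc (k - j)"
  using assms walk_drop[OF walk_take[OF assms(1), of "Suc k"], of j]
  by (auto simp: hd_drop_conv_nth last_conv_nth)

lemma walk_shorten_to_path: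
  "walk V E xs \<Longrightarrow> \<exists>ys. walk V E ys \<and> distinct ys \<and> hd ys = hd xs \<and> last ys = last xs
      \<and> length ys \<le> length xs \<and> set ys \<subseteq> set xs"
proof (induction "length xs" arbitrary: xs rule: less_induct)
  case less
  show ?case
  proof (cases "distinct xs")
    case False
    then obtain as y bs cs where xs: "xs = as @ [y] @ bs @ [y] @ cs"
      using not_distinct_decomp by blast
    have "walk V E (as @ [y])"
      using walk_take[OF less.prems, of "Suc (length as)"] by (simp add: xs)
    moreover have "walk V E (y # cs)"
      using walk_drop[OF less.prems, of "length as + Suc (length bs)"] by (simp add: xs)
    ultimately have "walk V E (as @ [y] @ cs)"
      using walk_append[of V E "as @ [y]" "y # cs"] by simp
    moreover have "length (as @ [y] @ cs) < length xs" by (simp add: xs)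
    ultimately obtain ys where "walk V E ys" "distinct ys" "hd ys = hd (as @ [y] @ cs)"
      "last ys = last (as @ [y] @ cs)" "length ys \<le> length (as @ [y] @ cs)"
      "set ys \<subseteq> set (as @ [y] @ cs)"
      using less.hyps by blast
    then show ?thesis
      by (intro exI[of _ ys]) (auto simp: xs hd_append)
  qed (use less.prems in blast)
qed

lemma gdist_le_length:
  assumes "walk V E xs" "hd xs = u" "last xs = v"
  shows "gdist V E u v \<le> length xs - 1"
  unfolding gdist_def
proof (rule Least_le)
  have "length xs = Suc (length xs - 1)" using walk_not_Nil[OF assms(1)] by simp
  with assms show "\<exists>ys. walk V E ys \<and> hd ys = u \<and> last ys = v \<and> length ys = Suc (length xs - 1)"
    by blast
qed

lemma gdist_edge: "u \<in> V \<Longrightarrow> v \<in> V \<Longrightarrow> E u v \<Longrightarrow> gdist V E u v \<le> 1"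
  using gdist_le_length[of V E "[u, v]" u v] by (simp add: walk_Cons_Cons)

lemma gdist_self [simp]: "u \<in> V \<Longrightarrow> gdist V E u u = 0"
  using gdist_le_length[of V E "[u]" u u] by simp

lemma shortest_walk_exists:
  assumes "connected_graph V E" "u \<in> V" "v \<in> V"
  shows "\<exists>xs. walk V E xs \<and> hd xs = u \<and> last xs = v \<and> length xs = Suc (gdist V E u v)"
proof -
  obtain xs where xs: "walk V E xs" "hd xs = u" "last xs = v"
    using assms unfolding connected_graph_def by blast
  then have "length xs = Suc (length xs - 1)" using walk_not_Nil by fastforce
  with xs have "\<exists>n xs. walk V E xs \<and> hd xs = u \<and> last xs = v \<and> length xs = Suc n"
    by blast
  from LeastI_ex[OF this] show ?thesis unfolding gdist_def .
qed

lemma shortest_path_exists: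
  assumes "connected_graph V E" "u \<in> V" "v \<in> V"
  shows "\<exists>xs. walk V E xs \<and> distinct xs \<and> hd xs = u \<and> last xs = v
    \<and> length xs = Suc (gdist V E u v)"
proof -
  obtain xs where xs: "walk V E xs" "hd xs = u" "last xs = v" "length xs = Suc (gdist V E u v)"
    using shortest_walk_exists[OF assms] by blast
  then obtain ys where ys: "walk V E ys" "distinct ys" "hd ys = u" "last ys = v"
    "length ys \<le> length xs"
    using walk_shorten_to_path[OF xs(1)] by auto
  have "gdist V E u v \<le> length ys - 1" using gdist_le_length[OF ys(1,3,4)] .
  with ys(5) xs(4) walk_not_Nil[OF ys(1)] have "length ys = Suc (gdist V E u v)"
    by (cases ys) auto
  with ys show ?thesis by blast
qed

lemma gdist_commute:
  assumes "connected_graph V E" "u \<in> V" "v \<in> V"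
  shows "gdist V E u v = gdist V E v u"
proof -
  have le: "gdist V E b a \<le> gdist V E a b" if ab: "a \<in> V" "b \<in> V" for a b
  proof -
    obtain xs where xs: "walk V E xs" "hd xs = a" "last xs = b" "length xs = Suc (gdist V E a b)"
      using shortest_walk_exists[OF assms(1) ab] by blast
    have "walk V E (rev xs)"
      using walk_rev xs(1) assms(1) by (auto simp: connected_graph_def)
    moreover have "hd (rev xs) = b" "last (rev xs) = a"
      using xs walk_not_Nil by (auto simp: hd_rev last_rev)
    ultimately show ?thesis using gdist_le_length[of V E "rev xs" b a] xs(4) by simp
  qed
  show ?thesis using le[of u v] le[of v u] assms by simp
qed

lemma gdist_triangle:
  assumes "connected_graph V E" "u \<in> V" "v \<in> V" "w \<in> V"
  shows "gdist V E u w \<le> gdist V E u v + gdist V E v w"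
proof -
  obtain xs where xs: "walk V E xs" "hd xs = u" "last xs = v" "length xs = Suc (gdist V E u v)"
    using shortest_walk_exists[OF assms(1,2,3)] by blast
  obtain ys where ys: "walk V E ys" "hd ys = v" "last ys = w" "length ys = Suc (gdist V E v w)"
    using shortest_walk_exists[OF assms(1,3,4)] by blast
  have "walk V E (xs @ tl ys)" using walk_append[OF xs(1) ys(1)] xs(3) ys(2) by simp
  moreover have "hd (xs @ tl ys) = u" "last (xs @ tl ys) = w"
    using xs ys walk_not_Nil[OF xs(1)] walk_not_Nil[OF ys(1)] by (cases ys; auto)+
  ultimately show ?thesis using gdist_le_length[of V E "xs @ tl ys" u w] xs(4) ys(4) by simp
qed

lemma gdist_le_1_imp_adjacent:
  assumes "connected_graph V E" "u \<in> V" "v \<in> V" "gdist V E u v \<le> 1"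
  shows "u = v \<or> E u v"
proof -
  obtain xs where xs: "walk V E xs" "hd xs = u" "last xs = v" "length xs = Suc (gdist V E u v)"
    using shortest_walk_exists[OF assms(1-3)] by blast
  with assms(4) consider "length xs = 1" | "length xs = 2" by linarith
  then show ?thesis
  proof cases
    case 1
    then obtain x where "xs = [x]" by (cases xs) auto
    with xs show ?thesis by simp
  next
    case 2
    then obtain a b where "xs = [a, b]" by (cases xs; cases "tl xs") auto
    with xs show ?thesis by (simp add: walk_Cons_Cons)
  qed
qed

lemma gdist_le_ecc: "connected_graph V E \<Longrightarrow> y \<in> V \<Longrightarrow> gdist V E x y \<le> ecc V E x"
  unfolding ecc_def connected_graph_def graph_def by (intro Max_ge) auto

lemma gdist_le_diam:
  assumes "connected_graph V E" "x \<in> V" "y \<in> V"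
  shows "gdist V E x y \<le> diam V E"
proof -
  have "ecc V E x \<le> diam V E"
    using assms unfolding diam_def connected_graph_def graph_def by (intro Max_ge) auto
  then show ?thesis using gdist_le_ecc[OF assms(1,3), of x] by simp
qed

section \<open>Paths in trees\<close>

lemma cycle_through_neighbours:
  assumes g: "graph V E" and x: "x \<in> V" "E x a" "E x b" "a \<noteq> b"
    and W: "walk V E W" "hd W = a" "last W = b" "x \<notin> set W"
  shows "has_cycle V E"
proof -
  obtain S where S: "walk V E S" "distinct S" "hd S = a" "last S = b" "set S \<subseteq> set W"
    using walk_shorten_to_path[OF W(1)] W(2,3) by auto
  then obtain S' where S': "S = a # S'" using walk_not_Nil[OF S(1)] by (cases S) auto
  have "S' \<noteq> []" using S S' \<open>a \<noteq> b\<close> by auto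
  have "walk V E (x # S)" using S S' x by (simp add: walk_Cons_Cons)
  moreover have "distinct (x # S)" using S W(4) by auto
  moreover have "3 \<le> length (x # S)" using S' \<open>S' \<noteq> []\<close> by (cases S') auto
  moreover have "E (last (x # S)) (hd (x # S))" using S S' x(3) g by (simp add: graph_def)
  ultimately show ?thesis unfolding has_cycle_def by blast
qed

lemma tree_path_unique:
  assumes t: "tree V E"
  shows "walk V E xs \<Longrightarrow> walk V E ys \<Longrightarrow> distinct xs \<Longrightarrow> distinct ys \<Longrightarrow> hd xs = hd ys \<Longrightarrow>
    last xs = last ys \<Longrightarrow> xs = ys"
proof (induction xs arbitrary: ys)
  case Nil
  then show ?case by (simp add: walk_def)
next
  case (Cons x xs')
  have g: "graph V E" and nc: "\<not> has_cycle V E"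
    using t by (auto simp: tree_def connected_graph_def)
  obtain ys' where ys: "ys = x # ys'" using Cons.prems(2,5) walk_not_Nil by (cases ys) fastforce+
  show ?case
  proof (cases "xs' = [] \<or> ys' = []")
    case True
    have "xs' = [] \<longleftrightarrow> ys' = []"
      using Cons.prems(3,4,6) ys last_in_set by (cases "xs' = []"; cases "ys' = []") auto
    with True show ?thesis using ys by simp
  next
    case False
    then obtain a xs'' b ys'' where xa: "xs' = a # xs''" and yb: "ys' = b # ys''"
      by (meson list.exhaust)
    have wx: "walk V E xs'" "E x a" "x \<in> V" using Cons.prems(1) xa by (auto simp: walk_Cons_Cons)
    have wy: "walk V E ys'" "E x b" using Cons.prems(2) ys yb by (auto simp: walk_Cons_Cons)
    have lst: "last xs' = last ys'" using Cons.prems(6) ys xa yb by simp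
    show ?thesis
    proof (cases "a = b")
      case True
      then show ?thesis
        using Cons.IH[OF wx(1) wy(1)] Cons.prems(3,4) ys xa yb lst by simp
    next
      case False
      have "walk V E (xs' @ tl (rev ys'))"
        using walk_append[OF wx(1) walk_rev[OF g wy(1)]] lst yb by (simp add: hd_rev)
      moreover have "hd (xs' @ tl (rev ys')) = a" "last (xs' @ tl (rev ys')) = b"
        using xa yb lst by (auto simp: last_rev last_append last_tl)
      moreover have "x \<notin> set (xs' @ tl (rev ys'))"
        using Cons.prems(3,4) ys yb by (auto dest: list.set_sel(2)[rotated])
      ultimately have "has_cycle V E"
        using cycle_through_neighbours[OF g wx(3) wx(2) wy(2) False] by blast
      with nc show ?thesis by blast
    qed
  qed
qed

lemma tree_gdist_path:
  assumes t: "tree V E" and w: "walk V E xs" "distinct xs"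
  shows "gdist V E (hd xs) (last xs) = length xs - 1"
proof -
  have c: "connected_graph V E" using t by (simp add: tree_def)
  have "hd xs \<in> V" "last xs \<in> V" using walk_subset[OF w(1)] walk_not_Nil[OF w(1)] by auto
  then obtain p where p: "walk V E p" "distinct p" "hd p = hd xs" "last p = last xs"
      "length p = Suc (gdist V E (hd xs) (last xs))"
    using shortest_path_exists[OF c] by blast
  have "p = xs" using tree_path_unique[OF t p(1) w(1) p(2) w(2) p(3) p(4)] .
  with p show ?thesis by simp
qed

lemma tree_gdist_join:
  assumes t: "tree V E" and p: "walk V E p" "distinct p" and q: "walk V E q" "distinct q"
    and pq: "last p = hd q" "set p \<inter> set q \<subseteq> {hd q}"
  shows "gdist V E (hd p) (last q) = (length p - 1) + (length q - 1)"
proof -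
  have ne: "p \<noteq> []" "q \<noteq> []" using p q walk_not_Nil by auto
  have "hd q \<notin> set (tl q)" using q(2) ne(2) by (cases q) auto
  then have "set p \<inter> set (tl q) = {}" using pq(2) list.set_sel(2)[OF ne(2)] by blast
  then have "distinct (p @ tl q)" using p(2) q(2) by (simp add: distinct_tl)
  with walk_append[OF p(1) q(1) pq(1)]
  have "gdist V E (hd (p @ tl q)) (last (p @ tl q)) = length (p @ tl q) - 1"
    by (rule tree_gdist_path[OF t])
  moreover have "last (p @ tl q) = last q" using ne pq(1) by (cases q) auto
  ultimately show ?thesis using ne by (cases q; cases p) auto
qed

lemma diametral_path_rev:
  assumes "connected_graph V E" "diametral_path V E ps"
  shows "diametral_path V E (rev ps)"
proof -
  have ps: "walk V E ps" "ps \<noteq> []" using assms(2) walk_not_Nil by (auto simp: diametral_path_def)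
  then have "hd ps \<in> V" "last ps \<in> V" using walk_subset[OF ps(1)] by auto
  then have "gdist V E (last ps) (hd ps) = gdist V E (hd ps) (last ps)"
    using gdist_commute[OF assms(1)] by blast
  with assms ps show ?thesis
    unfolding diametral_path_def connected_graph_def by (simp add: walk_rev hd_rev last_rev)
qed

lemma protrudes_rev:
  assumes "protrudes V E ps u i"
  shows "protrudes V E (rev ps) u (length ps - Suc i)"
  unfolding protrudes_def
proof (intro conjI allI impI)
  fix j assume j: "j < length (rev ps)" "j \<noteq> length ps - Suc i"
  with assms show "gdist V E u (rev ps ! (length ps - Suc i)) < gdist V E u (rev ps ! j)"
    unfolding protrudes_def by (auto simp: rev_nth)
qed (use assms in \<open>auto simp: protrudes_def\<close>)

section \<open>Broadcasts with private targets\<close>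

lemma upper_broadcast_number_ge:
  assumes "connected_graph V E" "minimal_dominating V E h"
  shows "bcost V h \<le> upper_broadcast_number V E"
proof -
  let ?S = "{bcost V f | f. minimal_dominating V E f}"
  have "?S \<subseteq> {..(\<Sum>v\<in>V. ecc V E v)}"
    unfolding minimal_dominating_def dominating_def broadcast_def bcost_def
    by (auto intro: sum_mono)
  then have "finite ?S" using finite_subset by blast
  moreover have "bcost V h \<in> ?S" using assms(2) by blast
  ultimately show ?thesis unfolding upper_broadcast_number_def by (rule Max_ge)
qed

text \<open>A dominating broadcast of least cost among those below G is minimal.\<close>
lemma minimal_dominating_below:
  assumes "finite V" "dominating V E G"
  obtains h where "minimal_dominating V E h" "\<forall>x. h x \<le> G x"
proof -
  let ?P = "\<lambda>h. dominating V E h \<and> (\<forall>x. h x \<le> G x)"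
  obtain h where hP: "?P h" and hmin: "\<And>h'. ?P h' \<Longrightarrow> bcost V h \<le> bcost V h'"
    using ex_has_least_nat[of ?P G "bcost V"] assms(2) by blast
  have "minimal_dominating V E h"
    unfolding minimal_dominating_def
  proof (intro conjI ballI allI impI notI)
    fix v k assume v: "v \<in> V" and k: "k < h v" and dk: "dominating V E (h(v := k))"
    have "h v \<le> G v" using hP by blast
    with k have "k \<le> G v" by simp
    with hP have "\<forall>x. (h(v := k)) x \<le> G x" by simp
    with dk have "bcost V h \<le> bcost V (h(v := k))" using hmin by blast
    moreover have "bcost V (h(v := k)) < bcost V h" unfolding bcost_def
      using assms(1) v k by (intro sum_strict_mono_ex1) auto
    ultimately show False by simp
  qed (use hP in simp)
  with hP that show ?thesis by blast
qed

locale private_targets =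
  fixes V :: "'a set" and E :: "'a \<Rightarrow> 'a \<Rightarrow> bool" and m :: nat and ow pr :: "nat \<Rightarrow> 'a"
  assumes connected: "connected_graph V E" and two_owners: "2 \<le> m"
    and owners_in_V: "\<forall>k<m. ow k \<in> V" and targets_in_V: "\<forall>k<m. pr k \<in> V"
    and owners_distinct: "inj_on ow {..<m}"
    and target_private:
      "\<forall>k<m. \<forall>j<m. j \<noteq> k \<longrightarrow> max 1 (gdist V E (ow k) (pr k)) < gdist V E (ow k) (pr j)"
    and near_targets_owned: "\<forall>y\<in>V. (\<exists>j<m. gdist V E y (pr j) \<le> 1) \<longrightarrow>
      (\<exists>k<m. \<forall>j<m. j \<noteq> k \<longrightarrow> gdist V E (ow k) y < gdist V E (ow k) (pr j))"
begin

abbreviation "d \<equiv> gdist V E"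

definition foreign :: "'a \<Rightarrow> nat set" where
  "foreign x = {j. j < m \<and> ow j \<noteq> x}"

text \<open>The largest radius at which x reaches no target of another owner.\<close>
definition reach :: "'a \<Rightarrow> nat" where
  "reach x = (if x \<in> V then Min ((\<lambda>j. d x (pr j)) ` foreign x) - 1 else 0)"

lemma foreign_not_empty: "foreign x \<noteq> {}"
proof -
  have "ow 0 \<noteq> ow 1" using inj_onD[OF owners_distinct, of 0 1] two_owners by auto
  then have "0 \<in> foreign x \<or> 1 \<in> foreign x" using two_owners unfolding foreign_def by auto
  then show ?thesis by blast
qed

lemma foreign_owner: "k < m \<Longrightarrow> foreign (ow k) = {j. j < m \<and> j \<noteq> k}"
  using owners_distinct unfolding foreign_def inj_on_def by auto

lemma reach_le: "x \<in> V \<Longrightarrow> j \<in> foreign x \<Longrightarrow> reach x \<le> d x (pr j) - 1"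
  unfolding reach_def foreign_def by (simp add: Min_le diff_le_mono)

lemma reach_ge: "x \<in> V \<Longrightarrow> \<forall>j\<in>foreign x. n < d x (pr j) \<Longrightarrow> n \<le> reach x"
proof -
  assume "x \<in> V" "\<forall>j\<in>foreign x. n < d x (pr j)"
  then have "n < Min ((\<lambda>j. d x (pr j)) ` foreign x)"
    using foreign_not_empty by (subst Min_gr_iff) (auto simp: foreign_def)
  with \<open>x \<in> V\<close> show ?thesis unfolding reach_def by simp
qed

lemma reach_owner: "k < m \<Longrightarrow> max 1 (d (ow k) (pr k)) \<le> reach (ow k)"
  using reach_ge[of "ow k"] owners_in_V target_private foreign_owner by auto

lemma dominating_reach: "dominating V E reach"
  unfolding dominating_def broadcast_def
proof (intro conjI ballI allI impI)
  fix x assume x: "x \<in> V"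
  from foreign_not_empty obtain j where j: "j \<in> foreign x" by blast
  then have "pr j \<in> V" using targets_in_V by (simp add: foreign_def)
  with x j reach_le[of x j] gdist_le_ecc[OF connected, of "pr j" x]
  show "reach x \<le> ecc V E x" by linarith
next
  fix y assume y: "y \<in> V"
  show "\<exists>x\<in>V. 1 \<le> reach x \<and> d y x \<le> reach x"
  proof (cases "\<exists>j<m. d y (pr j) \<le> 1")
    case True
    with near_targets_owned y obtain k
      where k: "k < m" "\<forall>j<m. j \<noteq> k \<longrightarrow> d (ow k) y < d (ow k) (pr j)"
      by blast
    then have "d (ow k) y \<le> reach (ow k)" using reach_ge[of "ow k"] owners_in_V foreign_owner by auto
    moreover have "d y (ow k) = d (ow k) y" using gdist_commute[OF connected] y owners_in_V k by blast
    moreover have "1 \<le> reach (ow k)" using reach_owner[OF k(1)] by simp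
    ultimately show ?thesis using owners_in_V k by auto
  next
    case False
    then have "\<forall>j\<in>foreign y. 1 < d y (pr j)" by (force simp: foreign_def)
    with y have "1 \<le> reach y" by (rule reach_ge)
    with y show ?thesis by auto
  qed
qed (simp add: reach_def)

text \<open>Below reach, a target can only be heard from its own owner.\<close>
lemma owner_pays:
  assumes "dominating V E h" "\<forall>x. h x \<le> reach x" "k < m"
  shows "max 1 (d (ow k) (pr k)) \<le> h (ow k)"
proof -
  have pk: "pr k \<in> V" using targets_in_V assms(3) by blast
  obtain x where x: "x \<in> V" "1 \<le> h x" "d (pr k) x \<le> h x"
    using assms(1) pk unfolding dominating_def by blast
  have "x = ow k"
  proof (rule ccontr)
    assume "x \<noteq> ow k"
    then have "reach x \<le> d x (pr k) - 1" using reach_le x assms(3) unfolding foreign_def by auto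
    moreover have "h x \<le> reach x" using assms(2) by blast
    ultimately show False using x gdist_commute[OF connected x(1) pk] by arith
  qed
  then show ?thesis using x gdist_commute[OF connected x(1) pk] by simp
qed

lemma not_diametrical:
  assumes "diam V E < (\<Sum>k<m. max 1 (d (ow k) (pr k)))"
  shows "\<not> diametrical V E"
proof -
  have "finite V" using connected by (simp add: connected_graph_def graph_def)
  then obtain h where h: "minimal_dominating V E h" "\<forall>x. h x \<le> reach x"
    using minimal_dominating_below dominating_reach by blast
  then have "(\<Sum>k<m. max 1 (d (ow k) (pr k))) \<le> (\<Sum>k<m. h (ow k))"
    using owner_pays by (intro sum_mono) (simp add: minimal_dominating_def)
  also have "\<dots> = (\<Sum>v\<in>ow ` {..<m}. h v)"
    by (simp add: sum.reindex[OF owners_distinct])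
  also have "\<dots> \<le> bcost V h" unfolding bcost_def
    using \<open>finite V\<close> owners_in_V by (intro sum_mono2) auto
  also have "\<dots> \<le> upper_broadcast_number V E" using upper_broadcast_number_ge[OF connected h(1)] .
  finally show ?thesis using assms unfolding diametrical_def by linarith
qed

end

lemma private_targets_if_separated:
  fixes ow pr :: "nat \<Rightarrow> 'a"
  assumes c: "connected_graph V E" and "2 \<le> m"
    and oV: "\<forall>k<m. ow k \<in> V" and pV: "\<forall>k<m. pr k \<in> V" and "inj_on ow {..<m}"
    and sep: "\<forall>k<m. \<forall>j<m. j \<noteq> k \<longrightarrow> gdist V E (ow k) (pr k) + 2 \<le> gdist V E (ow k) (pr j)"
  shows "private_targets V E m ow pr"
proof
  show "\<forall>k<m. \<forall>j<m. j \<noteq> k \<longrightarrow> max 1 (gdist V E (ow k) (pr k)) < gdist V E (ow k) (pr j)"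
    using sep by fastforce
  show "\<forall>y\<in>V. (\<exists>j<m. gdist V E y (pr j) \<le> 1) \<longrightarrow>
            (\<exists>k<m. \<forall>j<m. j \<noteq> k \<longrightarrow> gdist V E (ow k) y < gdist V E (ow k) (pr j))"
  proof (intro ballI impI)
    fix y assume y: "y \<in> V" and "\<exists>j<m. gdist V E y (pr j) \<le> 1"
    then obtain j where j: "j < m" "gdist V E y (pr j) \<le> 1" by blast
    have "gdist V E (ow j) y \<le> gdist V E (ow j) (pr j) + gdist V E (pr j) y"
      using gdist_triangle[OF c] oV pV j y by blast
    also have "gdist V E (pr j) y = gdist V E y (pr j)" using gdist_commute[OF c] pV j y by blast
    finally have "\<forall>i<m. i \<noteq> j \<longrightarrow> gdist V E (ow j) y < gdist V E (ow j) (pr i)"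
      using sep j by fastforce
    with j show "\<exists>k<m. \<forall>i<m. i \<noteq> k \<longrightarrow> gdist V E (ow k) y < gdist V E (ow k) (pr i)" by blast
  qed
qed (use assms in auto)

lemma nat_less_numeral_expand:
  "(\<forall>k<3::nat. P k) \<longleftrightarrow> P 0 \<and> P 1 \<and> P 2"
  "(\<forall>k<4::nat. P k) \<longleftrightarrow> P 0 \<and> P 1 \<and> P 2 \<and> P 3"
  "(\<forall>k<5::nat. P k) \<longleftrightarrow> P 0 \<and> P 1 \<and> P 2 \<and> P 3 \<and> P 4"
  "(\<exists>k<3::nat. P k) \<longleftrightarrow> P 0 \<or> P 1 \<or> P 2"
  "(\<exists>k<4::nat. P k) \<longleftrightarrow> P 0 \<or> P 1 \<or> P 2 \<or> P 3"
  "(\<Sum>k<3::nat. f k) = f 0 + f 1 + f 2"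
  "(\<Sum>k<4::nat. f k) = f 0 + f 1 + f 2 + f 3"
  "(\<Sum>k<5::nat. f k) = f 0 + f 1 + f 2 + f 3 + f 4"
  by (auto simp: numeral_eq_Suc less_Suc_eq)

section \<open>A limb of length at least three\<close>

locale long_limb =
  fixes V :: "'a set" and E :: "'a \<Rightarrow> 'a \<Rightarrow> bool" and ps :: "'a list"
    and u :: 'a and i :: nat
  assumes tree: "tree V E" and diametral: "diametral_path V E ps"
    and protrudes: "protrudes V E ps u i" and limb_long: "gdist V E u (ps ! i) > 2"
begin

abbreviation "d \<equiv> gdist V E"
abbreviation "D \<equiv> diam V E"
abbreviation "v j \<equiv> ps ! j"

lemma connected: "connected_graph V E"
  using tree by (simp add: tree_def)

lemma graph: "graph V E"
  using connected by (simp add: connected_graph_def)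

lemma path_walk: "walk V E ps" and path_distinct: "distinct ps" and path_length: "length ps = Suc D"
  using diametral by (auto simp: diametral_path_def)

lemma v_in_path: "j \<le> D \<Longrightarrow> v j \<in> set ps"
  using path_length by simp

lemma v_in_V: "j \<le> D \<Longrightarrow> v j \<in> V"
  using v_in_path walk_subset[OF path_walk] by blast

lemma v_eq_iff: "j \<le> D \<Longrightarrow> k \<le> D \<Longrightarrow> v j = v k \<longleftrightarrow> j = k"
  using path_distinct path_length nth_eq_iff_index_eq[of ps j k] by simp

lemma in_path_imp: "x \<in> set ps \<Longrightarrow> \<exists>j\<le>D. x = v j"
  using path_length by (auto simp: in_set_conv_nth less_Suc_eq_le)

lemma path_edge: "k < D \<Longrightarrow> E (v k) (v (Suc k))"
  using path_walk path_length unfolding walk_def by auto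

lemma d_commute: "x \<in> V \<Longrightarrow> y \<in> V \<Longrightarrow> d x y = d y x"
  using gdist_commute[OF connected] by blast

lemma d_path: "walk V E xs \<Longrightarrow> distinct xs \<Longrightarrow> d (hd xs) (last xs) = length xs - 1"
  using tree_gdist_path[OF tree] by blast

lemma path_between:
  assumes "j \<le> D" "t \<le> D"
  obtains s where "walk V E s" "distinct s" "hd s = v j" "last s = v t"
    "length s = Suc (if j \<le> t then t - j else j - t)" "set s \<subseteq> set ps"
proof -
  have seg: "walk V E (drop a (take (Suc b) ps)) \<and> distinct (drop a (take (Suc b) ps))
    \<and> hd (drop a (take (Suc b) ps)) = v a \<and> last (drop a (take (Suc b) ps)) = v b
    \<and> length (drop a (take (Suc b) ps)) = Suc (b - a) \<and> set (drop a (take (Suc b) ps)) \<subseteq> set ps"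
    if "a \<le> b" "b \<le> D" for a b
    using walk_segment[OF path_walk that(1)] that path_length path_distinct
    by (auto simp: distinct_drop dest: in_set_dropD in_set_takeD)
  show ?thesis
  proof (cases "j \<le> t")
    case True
    with seg[OF True assms(2)] that show ?thesis by auto
  next
    case False
    with seg[of t j] assms have "walk V E (rev (drop t (take (Suc j) ps)))"
      using walk_rev[OF graph] by auto
    with False seg[of t j] assms that[of "rev (drop t (take (Suc j) ps))"] show ?thesis
      by (auto simp: hd_rev last_rev)
  qed
qed

lemma d_v_v: "j \<le> D \<Longrightarrow> k \<le> D \<Longrightarrow> d (v j) (v k) = (if j \<le> k then k - j else j - k)"
  by (rule path_between[of j k]) (auto dest!: d_path)

lemma d_v_branch:
  assumes "t \<le> D" "j \<le> D" and q: "walk V E q" "distinct q" "hd q = v t"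
    and "set q \<inter> set ps \<subseteq> {v t}"
  shows "d (v j) (last q) = (if j \<le> t then t - j else j - t) + (length q - 1)"
proof (rule path_between[of j t])
  fix s assume s: "walk V E s" "distinct s" "hd s = v j" "last s = v t"
    "length s = Suc (if j \<le> t then t - j else j - t)" "set s \<subseteq> set ps"
  then have "set s \<inter> set q \<subseteq> {hd q}" using assms(6) q(3) by auto
  with tree_gdist_join[OF tree s(1,2) q(1,2)] s q(3) show ?thesis by simp
qed (use assms in auto)

lemma i_le_D: "i \<le> D" and u_in_V: "u \<in> V"
  and u_closest: "\<And>j. j \<le> D \<Longrightarrow> j \<noteq> i \<Longrightarrow> d u (v i) < d u (v j)"
  using protrudes path_length by (auto simp: protrudes_def)

definition ell :: nat where "ell = d u (v i)"

lemma ell_ge_3: "3 \<le> ell"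
  using limb_long unfolding ell_def by simp

definition limb :: "'a list" where
  "limb = (SOME w. walk V E w \<and> distinct w \<and> hd w = v i \<and> last w = u \<and> length w = Suc ell)"

abbreviation "y s \<equiv> limb ! s"

lemma limb_walk: "walk V E limb" and limb_distinct: "distinct limb"
  and limb_hd: "hd limb = v i" and limb_last: "last limb = u" and limb_length: "length limb = Suc ell"
proof -
  have "d (v i) u = ell" unfolding ell_def using d_commute[OF v_in_V[OF i_le_D] u_in_V] by simp
  then have "\<exists>w. walk V E w \<and> distinct w \<and> hd w = v i \<and> last w = u \<and> length w = Suc ell"
    using shortest_path_exists[OF connected v_in_V[OF i_le_D] u_in_V] by simp
  then have "walk V E limb \<and> distinct limb \<and> hd limb = v i \<and> last limb = u \<and> length limb = Suc ell"
    unfolding limb_def by (rule someI_ex)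
  then show "walk V E limb" "distinct limb" "hd limb = v i" "last limb = u" "length limb = Suc ell"
    by auto
qed

lemma y_0: "y 0 = v i"
  using limb_hd limb_walk by (simp add: hd_conv_nth walk_not_Nil)

lemma y_ell: "y ell = u"
  using limb_last limb_length limb_walk by (simp add: last_conv_nth walk_not_Nil)

lemma y_in_V: "s \<le> ell \<Longrightarrow> y s \<in> V"
  using walk_subset[OF limb_walk] limb_length by (simp add: subset_iff)

lemma y_eq_iff: "s \<le> ell \<Longrightarrow> s' \<le> ell \<Longrightarrow> y s = y s' \<longleftrightarrow> s = s'"
  using limb_distinct limb_length nth_eq_iff_index_eq[of limb s s'] by simp

lemma limb_prefix:
  assumes "s \<le> ell"
  shows "walk V E (take (Suc s) limb)" "distinct (take (Suc s) limb)"
    "hd (take (Suc s) limb) = v i" "last (take (Suc s) limb) = y s"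
    "length (take (Suc s) limb) = Suc s"
  using assms walk_take[OF limb_walk] limb_distinct limb_hd limb_length walk_not_Nil[OF limb_walk]
  by (auto simp: last_conv_nth)

lemma d_y_y: "s \<le> s' \<Longrightarrow> s' \<le> ell \<Longrightarrow> d (y s) (y s') = s' - s"
  using walk_segment[OF limb_walk, of s s'] limb_length limb_distinct d_path[of "drop s (take (Suc s') limb)"]
  by (simp add: distinct_drop)

lemma y_notin_path: "1 \<le> s \<Longrightarrow> s \<le> ell \<Longrightarrow> y s \<notin> set ps"
proof
  assume s: "1 \<le> s" "s \<le> ell" and "y s \<in> set ps"
  then obtain j where j: "j \<le> D" "y s = v j" using in_path_imp by blast
  show False
  proof (cases "j = i")
    case True
    with s j y_0 y_eq_iff[of s 0] show False by simp
  next
    case False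
    have "d u (v j) = d (y s) (y ell)" using j y_ell d_commute[OF u_in_V v_in_V[OF j(1)]] by simp
    also have "\<dots> < ell" using d_y_y s by simp
    finally show False using u_closest[OF j(1) False] unfolding ell_def by simp
  qed
qed

lemma limb_meets_path: "set (take (Suc s) limb) \<inter> set ps \<subseteq> {v i}"
proof
  fix x assume x: "x \<in> set (take (Suc s) limb) \<inter> set ps"
  then have "x \<in> set (take (Suc s) limb)" by blast
  then obtain t where t: "t \<le> ell" "x = y t"
    using limb_length by (auto simp: in_set_conv_nth less_Suc_eq_le)
  with x have "t = 0" using y_notin_path[of t] by (cases t) auto
  with t y_0 show "x \<in> {v i}" by simp
qed

lemma d_v_y: "j \<le> D \<Longrightarrow> s \<le> ell \<Longrightarrow> d (v j) (y s) = (if j \<le> i then i - j else j - i) + s"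
  using d_v_branch[OF i_le_D _ limb_prefix(1-3) limb_meets_path] limb_prefix(4,5) by simp

text \<open>
  The vertex y 3 is at distance i + 3 from v 0 and D - i + 3 from v D, and neither may exceed
  the diameter.
\<close>
lemma i_ge_3: "3 \<le> i" and i_add_3_le_D: "i + 3 \<le> D"
proof -
  have "d (v 0) (y 3) \<le> D" "d (v D) (y 3) \<le> D"
    using gdist_le_diam[OF connected v_in_V y_in_V] ell_ge_3 by auto
  then show "i + 3 \<le> D" "3 \<le> i" using d_v_y[of 0 3] d_v_y[of D 3] ell_ge_3 i_le_D by auto
qed

lemma path_neighbour:
  assumes "t \<le> D" "x \<in> set ps" "E (v t) x"
  shows "x = v (t - 1) \<or> x = v (t + 1)"
proof -
  obtain j where j: "j \<le> D" "x = v j" using in_path_imp[OF assms(2)] by blast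
  have "d (v t) (v j) \<le> 1" using gdist_edge[OF v_in_V[OF assms(1)] v_in_V[OF j(1)]] assms(3) j by simp
  moreover have "t \<noteq> j" using assms(3) j graph by (auto simp: graph_def)
  ultimately have "j = t - 1 \<or> j = t + 1" using d_v_v[OF assms(1) j(1)] by (auto split: if_splits)
  with j show ?thesis by auto
qed

definition branches_at :: "nat \<Rightarrow> 'a set" where
  "branches_at t = {c \<in> V. E (v t) c \<and> c \<notin> set ps}"

lemma near_path_vertex:
  assumes "t \<le> D" "x \<in> V" "d x (v t) \<le> 1"
  shows "x \<in> {v (t - 1), v t, v (t + 1)} \<union> branches_at t"
proof -
  have "x = v t \<or> E (v t) x"
    using gdist_le_1_imp_adjacent[OF connected assms(2) v_in_V[OF assms(1)] assms(3)] graph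
    by (auto simp: graph_def)
  then show ?thesis using path_neighbour[OF assms(1)] assms(2) unfolding branches_at_def by auto
qed

lemma d_v_pendant:
  assumes "t \<le> D" "j \<le> D" "a \<in> branches_at t"
  shows "d (v j) a = (if j \<le> t then t - j else j - t) + 1"
proof -
  have a: "a \<in> V" "E (v t) a" "a \<notin> set ps" using assms(3) by (auto simp: branches_at_def)
  then have "v t \<noteq> a" "set [v t, a] \<inter> set ps \<subseteq> {v t}" using v_in_path[OF assms(1)] by auto
  with a show ?thesis using d_v_branch[OF assms(1,2), of "[v t, a]"] v_in_V[OF assms(1)]
    by (simp add: walk_Cons_Cons)
qed

lemma pendant_notin_limb:
  assumes "t \<le> D" "a \<in> branches_at t" "t \<noteq> i \<or> a \<noteq> y 1"
  shows "a \<notin> set limb"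
proof
  assume "a \<in> set limb"
  then obtain s where s: "s \<le> ell" "a = y s" using limb_length by (auto simp: in_set_conv_nth less_Suc_eq_le)
  have "d (v t) a \<le> 1"
    using assms(2) gdist_edge[OF v_in_V[OF assms(1)]] unfolding branches_at_def by blast
  then have "(if t \<le> i then i - t else t - i) + s \<le> 1" using d_v_y[OF assms(1) s(1)] s(2) by simp
  moreover have "s \<noteq> 0" using s assms(2) y_0 v_in_path[OF i_le_D] by (cases s) (auto simp: branches_at_def)
  ultimately have "t = i" "s = 1" by (auto split: if_splits)
  with assms(3) s(2) show False by simp
qed

lemma d_y_branch:
  assumes s: "s \<le> ell" and q: "walk V E q" "distinct q" "hd q = v i"
    and "set q \<inter> set limb \<subseteq> {v i}"
  shows "d (y s) (last q) = s + (length q - 1)"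
proof -
  let ?p = "rev (take (Suc s) limb)"
  have "walk V E ?p" using walk_rev[OF graph limb_prefix(1)[OF s]] .
  moreover have "set ?p \<inter> set q \<subseteq> {hd q}" using assms(5) q(3) by (auto dest: in_set_takeD)
  ultimately have "d (hd ?p) (last q) = (length ?p - 1) + (length q - 1)"
    using tree_gdist_join[OF tree _ _ q(1,2)] limb_prefix[OF s] q(3) by (simp add: last_rev)
  then show ?thesis using limb_prefix[OF s] by (simp add: hd_rev)
qed

lemma d_y_v: "s \<le> ell \<Longrightarrow> j \<le> D \<Longrightarrow> d (y s) (v j) = (if j \<le> i then i - j else j - i) + s"
  using d_v_y d_commute[OF y_in_V v_in_V] by simp

lemma d_pendant_v:
  "t \<le> D \<Longrightarrow> j \<le> D \<Longrightarrow> a \<in> branches_at t \<Longrightarrow> d a (v j) = (if j \<le> t then t - j else j - t) + 1"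
  using d_v_pendant d_commute[OF _ v_in_V] by (simp add: branches_at_def)

lemma not_diametrical_if_second_branch:
  assumes "\<not> branches_at i \<subseteq> {y 1}"
  shows "\<not> diametrical V E"
proof -
  obtain c where c: "c \<in> branches_at i" "c \<noteq> y 1" using assms by blast
  then have cV: "c \<in> V" "E (v i) c" "c \<notin> set ps" by (auto simp: branches_at_def)
  have ii: "3 \<le> i" "i + 3 \<le> D" using i_ge_3 i_add_3_le_D by auto
  have "c \<notin> set limb" using pendant_notin_limb[OF i_le_D c(1)] c(2) by blast
  then have c_y: "d (y s) c = s + 1" if "s \<le> ell" for s
    using d_y_branch[OF that, of "[v i, c]"] cV v_in_V[OF i_le_D] v_in_path[OF i_le_D] limb_hd
      walk_not_Nil[OF limb_walk] by (auto simp: walk_Cons_Cons)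
  let ?o = "[v 0, v D, c, y 3]" and ?t = "[v (i - 1), v (i + 1), c, y 1]"
  have dist: "d (v 0) (v (i - 1)) = i - 1" "d (v 0) (v (i + 1)) = i + 1" "d (v 0) c = i + 1"
    "d (v 0) (y 1) = i + 1"
    "d (v D) (v (i - 1)) = D - i + 1" "d (v D) (v (i + 1)) = D - i - 1" "d (v D) c = D - i + 1"
    "d (v D) (y 1) = D - i + 1"
    "d c (v (i - 1)) = 2" "d c (v (i + 1)) = 2" "d c c = 0" "d c (y 1) = 2"
    "d (y 3) (v (i - 1)) = 4" "d (y 3) (v (i + 1)) = 4" "d (y 3) c = 4" "d (y 3) (y 1) = 2"
    using d_v_v[of 0] d_v_v[of D] d_v_pendant[OF i_le_D _ c(1)] d_v_y[of _ 1]
      d_pendant_v[OF i_le_D _ c(1)] d_y_v[of 3] c_y[of 1] c_y[of 3] d_commute[OF cV(1) y_in_V, of 1]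
      d_y_y[of 1 3] d_commute[OF y_in_V y_in_V, of 1 3] cV(1) ii ell_ge_3
    by auto
  have "c \<noteq> y 3" using \<open>c \<notin> set limb\<close> limb_length ell_ge_3 by auto
  then have "distinct ?o"
    using v_eq_iff[of 0 D] v_in_path[of 0] v_in_path[of D] cV y_notin_path[of 3] ell_ge_3 ii
    by auto
  have "private_targets V E 4 ((!) ?o) ((!) ?t)"
  proof (rule private_targets_if_separated[OF connected])
    show "inj_on ((!) ?o) {..<4}" using \<open>distinct ?o\<close> by (simp add: inj_on_nth)
    show "\<forall>k<4. ?o ! k \<in> V" "\<forall>k<4. ?t ! k \<in> V"
      using v_in_V[of 0] v_in_V[of D] v_in_V[of "i - 1"] v_in_V[of "i + 1"] cV y_in_V ell_ge_3 ii
      by (auto simp: nat_less_numeral_expand)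
    show "\<forall>k<4. \<forall>j<4. j \<noteq> k \<longrightarrow> d (?o ! k) (?t ! k) + 2 \<le> d (?o ! k) (?t ! j)"
      using dist ii by (simp add: nat_less_numeral_expand; arith)
  qed simp
  moreover have "D < (\<Sum>k<4. max 1 (d (?o ! k) (?t ! k)))"
  proof -
    have "(\<Sum>k<4. max 1 (d (?o ! k) (?t ! k))) = max 1 (i - 1) + max 1 (D - i - 1) + 1 + 2"
      using dist by (simp add: nat_less_numeral_expand)
    with ii show ?thesis by arith
  qed
  ultimately show ?thesis by (rule private_targets.not_diametrical)
qed

lemma limb_inter_path: "set limb \<inter> set ps \<subseteq> {v i}"
  using limb_meets_path[of ell] limb_length by simp

lemma d_y_pendant_next:
  assumes t: "t + 1 = i \<or> t = i + 1" and a: "a \<in> branches_at t" and s: "s \<le> ell"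
  shows "d (y s) a = s + 2"
proof -
  have tD: "t \<le> D" using t i_le_D i_add_3_le_D by auto
  have a': "a \<in> V" "E (v t) a" "a \<notin> set ps" using a by (auto simp: branches_at_def)
  have "E (v i) (v t)"
    using t path_edge[of t] path_edge[of i] i_le_D i_add_3_le_D graph by (auto simp: graph_def)
  moreover have "v t \<noteq> v i" using v_eq_iff[OF tD i_le_D] t by auto
  moreover have "a \<notin> set limb" using pendant_notin_limb[OF tD a] t by auto
  moreover have "v t \<notin> set limb" using limb_inter_path v_in_path[OF tD] \<open>v t \<noteq> v i\<close> by auto
  ultimately show ?thesis
    using d_y_branch[OF s, of "[v i, v t, a]"] a' v_in_V[OF i_le_D] v_in_V[OF tD]
      v_in_path[OF tD] v_in_path[OF i_le_D]
    by (auto simp: walk_Cons_Cons)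
qed

lemma not_diametrical_if_branches_on_both_sides:
  assumes "a \<in> branches_at (i - 1)" "b \<in> branches_at (i + 1)"
  shows "\<not> diametrical V E"
proof -
  have ii: "3 \<le> i" "i + 3 \<le> D" using i_ge_3 i_add_3_le_D by auto
  have aV: "a \<in> V" "E (v (i - 1)) a" "a \<notin> set ps" and bV: "b \<in> V" "E (v (i + 1)) b" "b \<notin> set ps"
    using assms by (auto simp: branches_at_def)
  have "d (v (i + 1)) b \<le> 1" using bV v_in_V[of "i + 1"] ii by (intro gdist_edge) auto
  moreover have "d (v (i + 1)) a = 3" using d_v_pendant[OF _ _ assms(1), of "i + 1"] ii by simp
  ultimately have "a \<noteq> b" by auto
  have "walk V E [a, v (i - 1), v i, v (i + 1), b]"
    using aV bV v_in_V[of "i - 1"] v_in_V[of i] v_in_V[of "i + 1"] path_edge[of "i - 1"]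
      path_edge[of i] ii graph by (auto simp: walk_Cons_Cons graph_def)
  moreover have "distinct [a, v (i - 1), v i, v (i + 1), b]"
    using \<open>a \<noteq> b\<close> aV bV v_in_path[of "i - 1"] v_in_path[of i] v_in_path[of "i + 1"]
      v_eq_iff[of "i - 1" i] v_eq_iff[of i "i + 1"] v_eq_iff[of "i - 1" "i + 1"] ii by auto
  ultimately have dab: "d a b = 4" using d_path by fastforce
  let ?o = "[v 0, a, y 3, b, v D]" and ?t = "[v (i - 2), a, v i, b, v (i + 2)]"
  have dist: "d (v 0) (v (i - 2)) = i - 2" "d (v 0) a = i" "d (v 0) (v i) = i" "d (v 0) b = i + 2"
    "d (v 0) (v (i + 2)) = i + 2"
    "d a (v (i - 2)) = 2" "d a a = 0" "d a (v i) = 2" "d a b = 4" "d a (v (i + 2)) = 4"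
    "d (y 3) (v (i - 2)) = 5" "d (y 3) a = 5" "d (y 3) (v i) = 3" "d (y 3) b = 5"
    "d (y 3) (v (i + 2)) = 5"
    "d b (v (i - 2)) = 4" "d b a = 4" "d b (v i) = 2" "d b b = 0" "d b (v (i + 2)) = 2"
    "d (v D) (v (i - 2)) = D - i + 2" "d (v D) a = D - i + 2" "d (v D) (v i) = D - i"
    "d (v D) b = D - i" "d (v D) (v (i + 2)) = D - i - 2"
    using d_v_v[of 0] d_v_v[of D] d_v_pendant[OF _ _ assms(1)] d_v_pendant[OF _ _ assms(2)]
      d_pendant_v[OF _ _ assms(1)] d_pendant_v[OF _ _ assms(2)] d_y_v[of 3]
      d_y_pendant_next[OF _ assms(1), of 3] d_y_pendant_next[OF _ assms(2), of 3]
      dab d_commute[OF aV(1) bV(1)] aV(1) bV(1) ii ell_ge_3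
    by auto
  have "a \<noteq> y 3" "b \<noteq> y 3"
    using pendant_notin_limb[OF _ assms(1)] pendant_notin_limb[OF _ assms(2)] limb_length ell_ge_3 ii
    by force+
  then have "distinct ?o"
    using \<open>a \<noteq> b\<close> v_eq_iff[of 0 D] v_in_path[of 0] v_in_path[of D] aV bV y_notin_path[of 3] ell_ge_3 ii
    by auto
  have "private_targets V E 5 ((!) ?o) ((!) ?t)"
  proof (rule private_targets_if_separated[OF connected])
    show "inj_on ((!) ?o) {..<5}" using \<open>distinct ?o\<close> by (simp add: inj_on_nth)
    show "\<forall>k<5. ?o ! k \<in> V" "\<forall>k<5. ?t ! k \<in> V"
      using v_in_V[of 0] v_in_V[of D] v_in_V[of "i - 2"] v_in_V[of i] v_in_V[of "i + 2"] aV bV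
        y_in_V ell_ge_3 ii
      by (auto simp: nat_less_numeral_expand)
    show "\<forall>k<5. \<forall>j<5. j \<noteq> k \<longrightarrow> d (?o ! k) (?t ! k) + 2 \<le> d (?o ! k) (?t ! j)"
      using dist ii by (simp add: nat_less_numeral_expand; arith)
  qed simp
  moreover have "D < (\<Sum>k<5. max 1 (d (?o ! k) (?t ! k)))"
  proof -
    have "(\<Sum>k<5. max 1 (d (?o ! k) (?t ! k))) = max 1 (i - 2) + 1 + 3 + 1 + max 1 (D - i - 2)"
      using dist by (simp add: nat_less_numeral_expand)
    with ii show ?thesis by arith
  qed
  ultimately show ?thesis by (rule private_targets.not_diametrical)
qed

lemma not_diametrical_if_branch_before_only:
  assumes vi: "branches_at i \<subseteq> {y 1}" and a: "a \<in> branches_at (i - 1)"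
    and after: "branches_at (i + 1) = {}"
  shows "\<not> diametrical V E"
proof -
  have ii: "3 \<le> i" "i + 3 \<le> D" using i_ge_3 i_add_3_le_D by auto
  have aV: "a \<in> V" "a \<notin> set ps" using a by (auto simp: branches_at_def)
  let ?o = "[v 0, a, y 3, v D]" and ?t = "[v (i - 2), a, v i, v (i + 1)]"
  have dist: "d (v 0) (v (i - 2)) = i - 2" "d (v 0) a = i" "d (v 0) (v i) = i"
    "d (v 0) (v (i + 1)) = i + 1"
    "d a (v (i - 2)) = 2" "d a a = 0" "d a (v i) = 2" "d a (v (i + 1)) = 3"
    "d (y 3) (v (i - 2)) = 5" "d (y 3) a = 5" "d (y 3) (v i) = 3" "d (y 3) (v (i + 1)) = 4"
    "d (v D) (v (i - 2)) = D - i + 2" "d (v D) a = D - i + 2" "d (v D) (v i) = D - i"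
    "d (v D) (v (i + 1)) = D - i - 1"
    using d_v_v[of 0] d_v_v[of D] d_v_pendant[OF _ _ a] d_pendant_v[OF _ _ a] d_y_v[of 3]
      d_y_pendant_next[OF _ a, of 3] aV(1) ii ell_ge_3
    by auto
  have "a \<noteq> y 3" using pendant_notin_limb[OF _ a] limb_length ell_ge_3 ii by force
  then have "distinct ?o"
    using v_eq_iff[of 0 D] v_in_path[of 0] v_in_path[of D] aV y_notin_path[of 3] ell_ge_3 ii
    by auto
  let ?Q = "\<lambda>x. \<exists>k<4. \<forall>j<4. j \<noteq> k \<longrightarrow> d (?o ! k) x < d (?o ! k) (?t ! j)"
  have by_v0: "?Q x" if "d (v 0) x < i" for x
    using that dist by (intro exI[of _ 0]) (simp add: nat_less_numeral_expand)
  have by_a: "?Q x" if "d a x < 2" for x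
    using that dist by (intro exI[of _ 1]) (simp add: nat_less_numeral_expand)
  have by_y3: "?Q x" if "d (y 3) x < 4" for x
    using that dist by (intro exI[of _ 2]) (simp add: nat_less_numeral_expand)
  have by_vD: "?Q x" if "d (v D) x < D - i" for x
    using that dist ii by (intro exI[of _ 3]) (simp add: nat_less_numeral_expand)
  have "?Q (v (i - 1))" "?Q (v i)" "?Q (v (i + 1))" "?Q (y 1)" "?Q (v (i + 2))"
    using by_v0[of "v (i - 1)"] by_y3[of "v i"] by_vD[of "v (i + 1)"] by_y3[of "y 1"]
      by_vD[of "v (i + 2)"] d_v_v[of 0] d_v_v[of D] d_y_v[of 3] d_y_y[of 1 3]
      d_commute[OF y_in_V y_in_V, of 1 3] ii ell_ge_3
    by auto
  have "private_targets V E 4 ((!) ?o) ((!) ?t)"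
  proof
    show "inj_on ((!) ?o) {..<4}" using \<open>distinct ?o\<close> by (simp add: inj_on_nth)
    show "\<forall>k<4. ?o ! k \<in> V" "\<forall>k<4. ?t ! k \<in> V"
      using v_in_V[of 0] v_in_V[of D] v_in_V[of "i - 2"] v_in_V[of i] v_in_V[of "i + 1"] aV
        y_in_V ell_ge_3 ii
      by (auto simp: nat_less_numeral_expand)
    show "\<forall>k<4. \<forall>j<4. j \<noteq> k \<longrightarrow> max 1 (d (?o ! k) (?t ! k)) < d (?o ! k) (?t ! j)"
      using dist ii by (simp add: nat_less_numeral_expand; arith)
    show "\<forall>x\<in>V. (\<exists>j<4. d x (?t ! j) \<le> 1) \<longrightarrow> ?Q x"
    proof (intro ballI impI)
      fix x assume x: "x \<in> V" "\<exists>j<4. d x (?t ! j) \<le> 1"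
      then consider "d x (v (i - 2)) \<le> 1" | "d x a \<le> 1" | "d x (v i) \<le> 1" | "d x (v (i + 1)) \<le> 1"
        by (auto simp: nat_less_numeral_expand)
      then show "?Q x"
      proof cases
        case 1
        have "d (v 0) x \<le> d (v 0) (v (i - 2)) + d (v (i - 2)) x"
          using gdist_triangle[OF connected v_in_V v_in_V x(1)] ii by auto
        with 1 dist(1) d_commute[OF x(1) v_in_V, of "i - 2"] ii show ?thesis by (intro by_v0) auto
      next
        case 2
        then show ?thesis using by_a d_commute[OF x(1) aV(1)] by simp
      next
        case 3
        then have "x \<in> {v (i - 1), v i, v (i + 1), y 1}"
          using near_path_vertex[OF i_le_D x(1)] vi by auto
        then show ?thesis using \<open>?Q (v (i - 1))\<close> \<open>?Q (v i)\<close> \<open>?Q (v (i + 1))\<close> \<open>?Q (y 1)\<close> by auto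
      next
        case 4
        then have "x \<in> {v i, v (i + 1), v (i + 2)}"
          using near_path_vertex[of "i + 1"] x(1) after ii by auto
        then show ?thesis using \<open>?Q (v i)\<close> \<open>?Q (v (i + 1))\<close> \<open>?Q (v (i + 2))\<close> by auto
      qed
    qed
  qed (simp_all add: connected)
  moreover have "D < (\<Sum>k<4. max 1 (d (?o ! k) (?t ! k)))"
  proof -
    have "(\<Sum>k<4. max 1 (d (?o ! k) (?t ! k))) = max 1 (i - 2) + 1 + 3 + max 1 (D - i - 1)"
      using dist by (simp add: nat_less_numeral_expand)
    with ii show ?thesis by arith
  qed
  ultimately show ?thesis by (rule private_targets.not_diametrical)
qed

lemma not_diametrical_if_no_side_branches:
  assumes vi: "branches_at i \<subseteq> {y 1}" and before: "branches_at (i - 1) = {}"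
    and after: "branches_at (i + 1) = {}"
  shows "\<not> diametrical V E"
proof -
  have ii: "3 \<le> i" "i + 3 \<le> D" using i_ge_3 i_add_3_le_D by auto
  let ?o = "[v 0, y 3, v D]" and ?t = "[v (i - 1), v i, v (i + 1)]"
  have dist: "d (v 0) (v (i - 1)) = i - 1" "d (v 0) (v i) = i" "d (v 0) (v (i + 1)) = i + 1"
    "d (y 3) (v (i - 1)) = 4" "d (y 3) (v i) = 3" "d (y 3) (v (i + 1)) = 4"
    "d (v D) (v (i - 1)) = D - i + 1" "d (v D) (v i) = D - i" "d (v D) (v (i + 1)) = D - i - 1"
    using d_v_v[of 0] d_v_v[of D] d_y_v[of 3] ii ell_ge_3 by auto
  have "distinct ?o"
    using v_eq_iff[of 0 D] v_in_path[of 0] v_in_path[of D] y_notin_path[of 3] ell_ge_3 ii by auto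
  let ?Q = "\<lambda>x. \<exists>k<3. \<forall>j<3. j \<noteq> k \<longrightarrow> d (?o ! k) x < d (?o ! k) (?t ! j)"
  have by_v0: "?Q x" if "d (v 0) x < i" for x
    using that dist by (intro exI[of _ 0]) (simp add: nat_less_numeral_expand)
  have by_y3: "?Q x" if "d (y 3) x < 4" for x
    using that dist by (intro exI[of _ 1]) (simp add: nat_less_numeral_expand)
  have by_vD: "?Q x" if "d (v D) x < D - i" for x
    using that dist ii by (intro exI[of _ 2]) (simp add: nat_less_numeral_expand)
  have "?Q (v (i - 2))" "?Q (v (i - 1))" "?Q (v i)" "?Q (v (i + 1))" "?Q (y 1)" "?Q (v (i + 2))"
    using by_v0[of "v (i - 2)"] by_v0[of "v (i - 1)"] by_y3[of "v i"] by_vD[of "v (i + 1)"]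
      by_y3[of "y 1"] by_vD[of "v (i + 2)"] d_v_v[of 0] d_v_v[of D] d_y_v[of 3] d_y_y[of 1 3]
      d_commute[OF y_in_V y_in_V, of 1 3] ii ell_ge_3
    by auto
  have "private_targets V E 3 ((!) ?o) ((!) ?t)"
  proof
    show "inj_on ((!) ?o) {..<3}" using \<open>distinct ?o\<close> by (simp add: inj_on_nth)
    show "\<forall>k<3. ?o ! k \<in> V" "\<forall>k<3. ?t ! k \<in> V"
      using v_in_V[of 0] v_in_V[of D] v_in_V[of "i - 1"] v_in_V[of i] v_in_V[of "i + 1"]
        y_in_V ell_ge_3 ii
      by (auto simp: nat_less_numeral_expand)
    show "\<forall>k<3. \<forall>j<3. j \<noteq> k \<longrightarrow> max 1 (d (?o ! k) (?t ! k)) < d (?o ! k) (?t ! j)"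
      using dist ii by (simp add: nat_less_numeral_expand; arith)
    show "\<forall>x\<in>V. (\<exists>j<3. d x (?t ! j) \<le> 1) \<longrightarrow> ?Q x"
    proof (intro ballI impI)
      fix x assume x: "x \<in> V" "\<exists>j<3. d x (?t ! j) \<le> 1"
      then obtain t where t: "t \<in> {i - 1, i, i + 1}" "d x (v t) \<le> 1"
        by (auto simp: nat_less_numeral_expand)
      moreover from t(1) ii have "t \<le> D" by auto
      ultimately have "x \<in> {v (t - 1), v t, v (t + 1)} \<union> branches_at t"
        using near_path_vertex[OF _ x(1)] by blast
      then have "x \<in> {v (i - 2), v (i - 1), v i, v (i + 1), y 1, v (i + 2)}"
        using t(1) before after vi ii by (auto simp: numeral_2_eq_2)
      then show "?Q x"
        using \<open>?Q (v (i - 2))\<close> \<open>?Q (v (i - 1))\<close> \<open>?Q (v i)\<close> \<open>?Q (v (i + 1))\<close> \<open>?Q (y 1)\<close>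
          \<open>?Q (v (i + 2))\<close> by auto
    qed
  qed (simp_all add: connected)
  moreover have "D < (\<Sum>k<3. max 1 (d (?o ! k) (?t ! k)))"
  proof -
    have "(\<Sum>k<3. max 1 (d (?o ! k) (?t ! k))) = max 1 (i - 1) + 3 + max 1 (D - i - 1)"
      using dist by (simp add: nat_less_numeral_expand)
    with ii show ?thesis by arith
  qed
  ultimately show ?thesis by (rule private_targets.not_diametrical)
qed

text \<open>Reversing the diametral path exchanges the two sides of v i.\<close>
lemma not_diametrical_if_branch_after_only:
  assumes vi: "branches_at i \<subseteq> {y 1}" and before: "branches_at (i - 1) = {}"
    and b: "b \<in> branches_at (i + 1)"
  shows "\<not> diametrical V E"
proof -
  have ii: "3 \<le> i" "i + 3 \<le> D" using i_ge_3 i_add_3_le_D by auto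
  interpret mirror: long_limb V E "rev ps" u "D - i"
    using tree diametral_path_rev[OF connected diametral] protrudes_rev[OF protrudes]
      limb_long path_length i_le_D
    by unfold_locales (auto simp: rev_nth)
  have v_mirror: "mirror.v (D - j) = v j" if "j \<le> D" for j
    using that path_length by (simp add: rev_nth)
  then have "mirror.limb = limb"
    unfolding mirror.limb_def limb_def mirror.ell_def ell_def using i_le_D by simp
  have branches_mirror: "mirror.branches_at (D - j) = branches_at j" if "j \<le> D" for j
    unfolding mirror.branches_at_def branches_at_def using v_mirror[OF that] by simp
  have "D - (i - 1) = D - i + 1" "D - (i + 1) = D - i - 1" using ii by auto
  then have "mirror.branches_at (D - i) \<subseteq> {mirror.y 1}" "b \<in> mirror.branches_at (D - i - 1)"
    "mirror.branches_at (D - i + 1) = {}"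
    using branches_mirror[of i] branches_mirror[of "i - 1"] branches_mirror[of "i + 1"]
      \<open>mirror.limb = limb\<close> vi before b ii by auto
  then show ?thesis by (rule mirror.not_diametrical_if_branch_before_only)
qed

end

theorem mainTheorem8:
  fixes V :: "'a set" and E :: "'a \<Rightarrow> 'a \<Rightarrow> bool" and ps :: "'a list"
    and u :: 'a and i :: nat
  assumes "tree V E"
    and "diametral_path V E ps"
    and "protrudes V E ps u i"
    and "gdist V E u (ps ! i) > 2"
  shows "\<not> diametrical V E"
proof -
  interpret long_limb V E ps u i
    using assms by unfold_locales
  show ?thesis
  proof (cases "branches_at i \<subseteq> {y 1}")
    case False
    then show ?thesis by (rule not_diametrical_if_second_branch)
  next
    case True
    then show ?thesis
      using not_diametrical_if_branches_on_both_sides not_diametrical_if_branch_before_only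
        not_diametrical_if_branch_after_only not_diametrical_if_no_side_branches
      by blast
  qed
qed

end
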